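(* Let $\{B_n(\mathbf{t})\}_{n\in\mathbb{N}}$ be a solution of the Volterra lattice hierarchy $$\partial_{t_{2k}}B_n=B_n\big(V^{(2k)}_{n+1}-V^{(2k)}_{n-1}\big),$$ with $V^{(2)}_n=B_n$, $V^{(4)}_n=V^{(2)}_n\big(V^{(2)}_{n-1}+V^{(2)}_n+V^{(2)}_{n+1}\big)$, $V^{(6)}_n=V^{(2)}_n\big(V^{(2)}_{n-1}V^{(2)}_{n+1}+V^{(4)}_{n-1}+V^{(4)}_n+V^{(4)}_{n+1}\big)$. For a given $n\in\mathbb{N}$ let $\phi(\mathbf{t})=B_n(\mathbf{t})$ and write $x=t_2$, $y=t_4$, $t=t_6$. Then $\phi$ satisfies the modified Kadomtsev–Petviashvili equation $$4\phi_t=6\phi_x\big(\xi-\phi^2\big)+\phi_{xxx}+3\xi_y,\qquad \phi_y=\xi_x,$$ for a function $\xi$ (namely $\xi=\partial_y\partial_x^{-1}\phi$).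
   Context: $\mathbf{t}=(t_2,t_4,t_6,\dots)$ are the even coupling constants; subscripts denote partial derivatives; $\partial_x^{-1}$ denotes an $x$-antiderivative. *)

theory Defs
  imports "HOL-Analysis.Analysis"
begin

text \<open>A lattice field: B n x y t, with lattice index n (integers) and times
  x = t2, y = t4, t = t6.\<close>
type_synonym lattice_field = "int \<Rightarrow> real \<Rightarrow> real \<Rightarrow> real \<Rightarrow> real"

definition V2 :: "lattice_field \<Rightarrow> lattice_field" where
  "V2 B n x y t = B n x y t"

definition V4 :: "lattice_field \<Rightarrow> lattice_field" where
  "V4 B n x y t = V2 B n x y t *
     (V2 B (n - 1) x y t + V2 B n x y t + V2 B (n + 1) x y t)"

definition V6 :: "lattice_field \<Rightarrow> lattice_field" where
  "V6 B n x y t = V2 B n x y t *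
     (V2 B (n - 1) x y t * V2 B (n + 1) x y t
      + V4 B (n - 1) x y t + V4 B n x y t + V4 B (n + 1) x y t)"

definition volterra_hierarchy :: "lattice_field \<Rightarrow> bool" where
  "volterra_hierarchy B \<longleftrightarrow> (\<forall>n x y t.
     ((\<lambda>x'. B n x' y t) has_real_derivative
        B n x y t * (V2 B (n + 1) x y t - V2 B (n - 1) x y t)) (at x) \<and>
     ((\<lambda>y'. B n x y' t) has_real_derivative
        B n x y t * (V4 B (n + 1) x y t - V4 B (n - 1) x y t)) (at y) \<and>
     ((\<lambda>t'. B n x y t') has_real_derivative
        B n x y t * (V6 B (n + 1) x y t - V6 B (n - 1) x y t)) (at t))"

end

theory Submission
  imports Defs
begin

text \<open>Along a solution of the hierarchy every derivative of \<open>B n\<close> in x, y and t is, by the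
  flows, a polynomial in the seven values \<open>B (n - 3), ..., B (n + 3)\<close>. With \<open>\<xi> = V4 B n\<close>
  the compatibility condition \<open>\<xi>\<^sub>x = \<phi>\<^sub>y\<close> is a conservation law: both sides equal
  \<open>B n (V4 B (n + 1) - V4 B (n - 1))\<close>. The mKP equation then reduces to a polynomial
  identity in those seven values.\<close>

definition volterra_flow :: "(lattice_field \<Rightarrow> lattice_field) \<Rightarrow> lattice_field \<Rightarrow> lattice_field" where
  "volterra_flow V B m x y t = B m x y t * (V B (m + 1) x y t - V B (m - 1) x y t)"

definition volterra_xx :: "lattice_field \<Rightarrow> lattice_field" where
  "volterra_xx B m x y t =
     volterra_flow V2 B m x y t * (B (m + 1) x y t - B (m - 1) x y t)
     + B m x y t * (volterra_flow V2 B (m + 1) x y t - volterra_flow V2 B (m - 1) x y t)"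

definition volterra_xxx :: "lattice_field \<Rightarrow> lattice_field" where
  "volterra_xxx B m x y t =
     volterra_xx B m x y t * (B (m + 1) x y t - B (m - 1) x y t)
     + 2 * volterra_flow V2 B m x y t
         * (volterra_flow V2 B (m + 1) x y t - volterra_flow V2 B (m - 1) x y t)
     + B m x y t * (volterra_xx B (m + 1) x y t - volterra_xx B (m - 1) x y t)"

lemma int_index_shifts:
  fixes n :: int
  shows "n + 1 + 1 = n + 2" "n + 1 - 1 = n" "n - 1 + 1 = n" "n - 1 - 1 = n - 2"
    "n + 2 + 1 = n + 3" "n + 2 - 1 = n + 1" "n - 2 + 1 = n - 1" "n - 2 - 1 = n - 3"
  by simp_all

lemma mkp_lattice_identity:
  fixes B :: lattice_field
  shows "4 * volterra_flow V6 B n x y t =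
     6 * volterra_flow V2 B n x y t * (V4 B n x y t - (B n x y t)\<^sup>2)
     + volterra_xxx B n x y t
     + 3 * (volterra_flow V4 B n x y t * (B (n - 1) x y t + B n x y t + B (n + 1) x y t)
            + B n x y t * (volterra_flow V4 B (n - 1) x y t + volterra_flow V4 B n x y t
                           + volterra_flow V4 B (n + 1) x y t))"
  unfolding volterra_xxx_def volterra_xx_def volterra_flow_def V6_def V4_def V2_def
  by (simp only: int_index_shifts) algebra

context
  fixes B :: lattice_field
  assumes volterra: "volterra_hierarchy B"
begin

lemma volterra_deriv_x:
  "((\<lambda>x'. B m x' y t) has_real_derivative volterra_flow V2 B m x y t) (at x)"
  using volterra unfolding volterra_hierarchy_def volterra_flow_def by blast

lemma volterra_deriv_y:
  "((\<lambda>y'. B m x y' t) has_real_derivative volterra_flow V4 B m x y t) (at y)"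
  using volterra unfolding volterra_hierarchy_def volterra_flow_def by blast

lemma volterra_deriv_t:
  "((\<lambda>t'. B m x y t') has_real_derivative volterra_flow V6 B m x y t) (at t)"
  using volterra unfolding volterra_hierarchy_def volterra_flow_def by blast

lemma volterra_flow_V2_deriv_x:
  "((\<lambda>x'. volterra_flow V2 B m x' y t) has_real_derivative volterra_xx B m x y t) (at x)"
  unfolding volterra_flow_def[of V2 B m] V2_def volterra_xx_def
  by (rule derivative_eq_intros volterra_deriv_x[unfolded volterra_flow_def V2_def] refl)+
    (simp add: volterra_flow_def V2_def algebra_simps)

lemma volterra_xx_deriv_x:
  "((\<lambda>x'. volterra_xx B m x' y t) has_real_derivative volterra_xxx B m x y t) (at x)"
  unfolding volterra_xx_def[of B m]
  by (rule derivative_eq_intros volterra_deriv_x[unfolded V2_def]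
      volterra_flow_V2_deriv_x refl)+
    (simp add: volterra_xxx_def volterra_xx_def volterra_flow_def V2_def algebra_simps)

lemma volterra_third_deriv_x:
  "deriv (\<lambda>x1. deriv (\<lambda>x2. deriv (\<lambda>x3. B m x3 y t) x2) x1) x = volterra_xxx B m x y t"
proof -
  have "deriv (\<lambda>x3. B m x3 y t) = (\<lambda>x2. volterra_flow V2 B m x2 y t)"
    using DERIV_imp_deriv[OF volterra_deriv_x] by blast
  moreover have "deriv (\<lambda>x2. volterra_flow V2 B m x2 y t) = (\<lambda>x1. volterra_xx B m x1 y t)"
    using DERIV_imp_deriv[OF volterra_flow_V2_deriv_x] by blast
  ultimately show ?thesis
    using DERIV_imp_deriv[OF volterra_xx_deriv_x] by simp
qed

lemma V4_deriv_x:
  "((\<lambda>x'. V4 B m x' y t) has_real_derivative volterra_flow V4 B m x y t) (at x)"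
  unfolding V4_def V2_def
  by (rule derivative_eq_intros volterra_deriv_x[unfolded volterra_flow_def V2_def] refl)+
    (simp only: volterra_flow_def V4_def V2_def int_index_shifts, simp add: algebra_simps)

lemma V4_deriv_y:
  "((\<lambda>y'. V4 B m x y' t) has_real_derivative
      volterra_flow V4 B m x y t * (B (m - 1) x y t + B m x y t + B (m + 1) x y t)
      + B m x y t * (volterra_flow V4 B (m - 1) x y t + volterra_flow V4 B m x y t
                     + volterra_flow V4 B (m + 1) x y t)) (at y)"
  unfolding V4_def[of B m] V2_def
  by (rule derivative_eq_intros volterra_deriv_y refl)+ (simp add: algebra_simps)

end

theorem theorem2p4:
  fixes B :: lattice_field and n :: int
  assumes "volterra_hierarchy B"
  shows "\<exists>\<xi> :: real \<Rightarrow> real \<Rightarrow> real \<Rightarrow> real. \<forall>x y t.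
     ((\<lambda>x'. \<xi> x' y t) has_real_derivative deriv (\<lambda>y'. B n x y' t) y) (at x) \<and>
     (\<lambda>y'. \<xi> x y' t) differentiable (at y) \<and>
     4 * deriv (\<lambda>t'. B n x y t') t =
       6 * deriv (\<lambda>x'. B n x' y t) x * (\<xi> x y t - (B n x y t)\<^sup>2)
       + deriv (\<lambda>x1. deriv (\<lambda>x2. deriv (\<lambda>x3. B n x3 y t) x2) x1) x
       + 3 * deriv (\<lambda>y'. \<xi> x y' t) y"
proof (intro exI[of _ "V4 B n"] allI conjI)
  fix x y t
  note derivs = volterra_deriv_x[OF assms] volterra_deriv_y[OF assms]
    volterra_deriv_t[OF assms] V4_deriv_y[OF assms]
  show "((\<lambda>x'. V4 B n x' y t) has_real_derivative deriv (\<lambda>y'. B n x y' t) y) (at x)"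
    using V4_deriv_x[OF assms] DERIV_imp_deriv[OF volterra_deriv_y[OF assms]] by simp
  show "(\<lambda>y'. V4 B n x y' t) differentiable (at y)"
    using V4_deriv_y[OF assms] real_differentiable_def by blast
  show "4 * deriv (\<lambda>t'. B n x y t') t =
       6 * deriv (\<lambda>x'. B n x' y t) x * (V4 B n x y t - (B n x y t)\<^sup>2)
       + deriv (\<lambda>x1. deriv (\<lambda>x2. deriv (\<lambda>x3. B n x3 y t) x2) x1) x
       + 3 * deriv (\<lambda>y'. V4 B n x y' t) y"
    \<comment> \<open>two passes: the innermost \<open>deriv\<close> must stay intact until the third derivative is rewritten\<close>
    unfolding volterra_third_deriv_x[OF assms]
    unfolding derivs[THEN DERIV_imp_deriv]
    by (rule mkp_lattice_identity)
qed

end
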